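(* Let $\lambda = a + i b$ be a complex eigenvalue (i.e. $b \neq 0$) of $\mathcal{A}\mathcal{P}^{-1}$, with $a$ the real part, $b$ the imaginary part, $i$ the imaginary unit, and $(x; y; z)$ the corresponding eigenvector of the equivalent scaled eigenproblem described in the context. Then, if $0\leq\gamma_{\min}^D<1$, any complex eigenvalue is such that \[ |\lambda-1| \le \sqrt{ 1 - \rho_{\min}}, \qquad \text{where} \quad \rho_{\min} = \frac{\gamma^A_{\min}\|x\|^2 + \gamma_{\min}^D \|y\|^2 + \gamma_{\min}^E \|z\|^2} {\|y\|^2 +\gamma^E_{\min}\|z\|^2}, \] otherwise (if $\gamma_{\min}^D \ge 1$), all eigenvalues are real.
   Context: Consider the double saddle-point matrix $\mathcal{A}=\begin{bmatrix} A & B^{T} & 0\\ B & -D & C^{T}\\ 0 & C & E\end{bmatrix}$ of size $n+m+p$, $n\ge\max\{m,p\}$, where $A\in\mathbb{R}^{n\times n}$ and $E\in\mathbb{R}^{p\times p}$ are symmetric positive definite (SPD), $B\in\mathbb{R}^{m\times n}$ has full row rank, $C\in\mathbb{R}^{p\times m}$ has full rank, and $D\in\mathbb{R}^{m\times m}$ is symmetric positive semidefinite. Let $S=D+BA^{-1}B^T$, $X=E+CS^{-1}C^T$, and let $\widehat A,\widehat S,\widehat X$ be SPD approximations of $A,S,X$. The block triangular preconditioner is $\mathcal{P}=\begin{bmatrix} \widehat A & B^{T} & 0\\ 0 & -\widehat S & C^{T}\\ 0 & 0 & \widehat X\end{bmatrix}$, and $\mathcal{P}_D=\mathrm{blkdiag}(\widehat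 A,\widehat S,\widehat X)$. Set $\widetilde S = D + B\widehat A^{-1}B^T$, $\widetilde X = E + C\widehat S^{-1}C^T$, $\overline A=\widehat A^{-1/2}A\widehat A^{-1/2}$, $\overline D=\widehat S^{-1/2}D\widehat S^{-1/2}$, $\overline E=\widehat X^{-1/2}E\widehat X^{-1/2}$, $R=\widehat S^{-1/2}B\widehat A^{-1/2}$, $K=\widehat X^{-1/2}C\widehat S^{-1/2}$. The eigenvalues of $\mathcal{A}\mathcal{P}^{-1}$ are those of the generalized problem $\mathcal{P}_D^{-1/2}\mathcal{A}\mathcal{P}_D^{-1/2}w=\lambda\mathcal{P}_D^{-1/2}\mathcal{P}\mathcal{P}_D^{-1/2}w$, i.e. $\overline A x - \lambda x = (\lambda-1)R^T y$, $Rx - \overline D y - (\lambda-1)K^T z = -\lambda y$, $Ky + \overline E z = \lambda z$, with $w=(x;y;z)$. Define $\gamma^A_{\min}=\lambda_{\min}(\widehat A^{-1}A)$ (with $\gamma_{\max}^A$ analogous), $\gamma^D_{\min}=\lambda_{\min}(\widehat S^{-1}D)\ge 0$, $\gamma^E_{\min}=\lambda_{\min}(\widehat X^{-1}E)>0$. It is assumed that $1\in[\gamma^A_{\min},\gamma^A_{\max}]$. *)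

theory Defs
  imports "HOL-Analysis.Analysis"
begin

definition spd :: "real^'n^'n \<Rightarrow> bool" where
  "spd M \<longleftrightarrow> transpose M = M \<and> (\<forall>v. v \<noteq> 0 \<longrightarrow> v \<bullet> (M *v v) > 0)"

definition spsd :: "real^'n^'n \<Rightarrow> bool" where
  "spsd M \<longleftrightarrow> transpose M = M \<and> (\<forall>v. v \<bullet> (M *v v) \<ge> 0)"

definition real_eigs :: "real^'n^'n \<Rightarrow> real set" where
  "real_eigs M = {\<mu>. \<exists>v. v \<noteq> 0 \<and> M *v v = \<mu> *\<^sub>R v}"

definition gamma_min :: "real^'n^'n \<Rightarrow> real^'n^'n \<Rightarrow> real" where
  "gamma_min Mhat M = Min (real_eigs (matrix_inv Mhat ** M))"

definition gamma_max :: "real^'n^'n \<Rightarrow> real^'n^'n \<Rightarrow> real" where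
  "gamma_max Mhat M = Max (real_eigs (matrix_inv Mhat ** M))"

definition cmat :: "real^'n^'m \<Rightarrow> complex^'n^'m" where
  "cmat M = (\<chi> i j. complex_of_real (M $ i $ j))"

text \<open>Hermitian quadratic form v^H M v of a real symmetric matrix (real part).
  For SPD Mhat this equals the squared Euclidean norm of Mhat^{1/2} v.\<close>
definition hqf :: "real^'n^'n \<Rightarrow> complex^'n \<Rightarrow> real" where
  "hqf M v = Re (\<Sum>i\<in>UNIV. \<Sum>j\<in>UNIV. cnj (v $ i) * complex_of_real (M $ i $ j) * v $ j)"

text \<open>The generalized eigenproblem  calA w = lambda calP w  in block form,
  w = (w1; w2; w3) nonzero.  Equivalently lambda is an eigenvalue of calA calP^{-1}.\<close>
definition gen_eig ::
  "real^'n^'n \<Rightarrow> real^'n^'m \<Rightarrow> real^'m^'p \<Rightarrow> real^'m^'m \<Rightarrow> real^'p^'p \<Rightarrow>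
   real^'n^'n \<Rightarrow> real^'m^'m \<Rightarrow> real^'p^'p \<Rightarrow>
   complex \<Rightarrow> complex^'n \<Rightarrow> complex^'m \<Rightarrow> complex^'p \<Rightarrow> bool" where
  "gen_eig A B C D E Ah Sh Xh lam w1 w2 w3 \<longleftrightarrow>
     (w1 \<noteq> 0 \<or> w2 \<noteq> 0 \<or> w3 \<noteq> 0) \<and>
     cmat A *v w1 + cmat (transpose B) *v w2
        = lam *s (cmat Ah *v w1 + cmat (transpose B) *v w2) \<and>
     cmat B *v w1 - cmat D *v w2 + cmat (transpose C) *v w3
        = lam *s (- (cmat Sh *v w2) + cmat (transpose C) *v w3) \<and>
     cmat C *v w2 + cmat E *v w3 = lam *s (cmat Xh *v w3)"

end

theory Submission
  imports Defs
begin

(* Multiplying the three block rows of the eigenproblem by w1^H, w2^H, w3^H gives three scalar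
   equations in lam, the Hermitian forms X, Y, Z of Ah, Sh, Xh, the forms \<alpha>, \<delta>, \<epsilon> of A, D, E,
   and two coupling terms. When Im lam \<noteq> 0 the coupling terms can be eliminated, leaving
     Y = X + \<delta> + |lam - 1|^2 Z   and   \<alpha> - X + |lam - 1|^2 (Y - Z + \<epsilon>) = 0.
   Each gamma_min is the minimum of a generalized Rayleigh quotient, so \<alpha> \<ge> gamma_A X,
   \<delta> \<ge> gamma_D Y, \<epsilon> \<ge> gamma_E Z, and the identities give
   |lam - 1|^2 (Y + gamma_E Z) \<le> (1 - gamma_D) Y - gamma_A X, which is the bound.
   If gamma_D \<ge> 1, the first identity forces w1 = w3 = 0; the first block row then reads
   B^T w2 = lam B^T w2, so B^T w2 = 0 and w2 = 0. *)

lemma symmetric_inner_commute: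
  fixes M :: "real^'n^'n"
  assumes "transpose M = M"
  shows "u \<bullet> (M *v w) = w \<bullet> (M *v u)"
proof -
  have "u \<bullet> (M *v w) = (transpose M *v u) \<bullet> w"
    by (simp add: dot_lmul_matrix)
  then show ?thesis
    using assms by (simp add: inner_commute)
qed

lemma spd_quadratic_nonneg:
  fixes M :: "real^'n^'n"
  assumes "spd M"
  shows "0 \<le> v \<bullet> (M *v v)"
  using assms unfolding spd_def by (cases "v = 0") (auto intro: less_imp_le)

lemma spd_invertible:
  fixes M :: "real^'n^'n"
  assumes "spd M"
  shows "invertible M"
proof -
  have "M *v v = 0 \<Longrightarrow> v = 0" for v
    using assms unfolding spd_def by force
  then show ?thesis
    by (simp add: invertible_left_inverse matrix_left_invertible_ker)
qed

lemma real_eigs_inv_mult_iff: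
  fixes M Mh :: "real^'n^'n"
  assumes "spd Mh"
  shows "\<mu> \<in> real_eigs (matrix_inv Mh ** M) \<longleftrightarrow> (\<exists>v. v \<noteq> 0 \<and> M *v v = \<mu> *\<^sub>R (Mh *v v))"
proof -
  have "invertible Mh"
    using assms by (rule spd_invertible)
  then have left: "matrix_inv Mh ** Mh = mat 1" and right: "Mh ** matrix_inv Mh = mat 1"
    using someI_ex[of "\<lambda>N. Mh ** N = mat 1 \<and> N ** Mh = mat 1"]
    by (simp_all add: invertible_def matrix_inv_def)
  have "(matrix_inv Mh ** M) *v v = \<mu> *\<^sub>R v \<longleftrightarrow> M *v v = \<mu> *\<^sub>R (Mh *v v)" for v
  proof
    assume "(matrix_inv Mh ** M) *v v = \<mu> *\<^sub>R v"
    then have "Mh *v ((matrix_inv Mh ** M) *v v) = Mh *v (\<mu> *\<^sub>R v)"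
      by simp
    then show "M *v v = \<mu> *\<^sub>R (Mh *v v)"
      by (simp add: matrix_vector_mul_assoc matrix_mul_assoc right matrix_vector_mult_scaleR)
  next
    assume "M *v v = \<mu> *\<^sub>R (Mh *v v)"
    then have "matrix_inv Mh *v (M *v v) = matrix_inv Mh *v (\<mu> *\<^sub>R (Mh *v v))"
      by simp
    then show "(matrix_inv Mh ** M) *v v = \<mu> *\<^sub>R v"
      by (simp add: matrix_vector_mul_assoc matrix_mul_assoc left matrix_vector_mult_scaleR)
  qed
  then show ?thesis
    unfolding real_eigs_def by auto
qed

lemma independent_if_biorthogonal:
  fixes Q :: "real^'n^'n" and S :: "(real^'n) set"
  assumes orth: "\<And>u w. u \<in> S \<Longrightarrow> w \<in> S \<Longrightarrow> u \<noteq> w \<Longrightarrow> u \<bullet> (Q *v w) = 0"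
    and nondeg: "\<And>u. u \<in> S \<Longrightarrow> u \<bullet> (Q *v u) \<noteq> 0"
  shows "independent S"
  unfolding independent_explicit_finite_subsets
proof (intro allI impI ballI)
  fix T c w
  assume T: "T \<subseteq> S" "finite T" and comb: "(\<Sum>v\<in>T. c v *\<^sub>R v) = 0" and w: "w \<in> T"
  have "0 = (\<Sum>v\<in>T. c v *\<^sub>R v) \<bullet> (Q *v w)"
    using comb by simp
  also have "\<dots> = (\<Sum>v\<in>T. c v * (v \<bullet> (Q *v w)))"
    by (simp add: inner_sum_left)
  also have "\<dots> = c w * (w \<bullet> (Q *v w))"
    using T w by (subst sum.remove[OF T(2) w]) (auto intro!: sum.neutral orth)
  finally show "c w = 0"
    using nondeg T w by auto
qed

lemma generalized_eigvecs_orthogonal: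
  fixes M Mh :: "real^'n^'n"
  assumes "transpose M = M" "transpose Mh = Mh"
    and "M *v u = \<mu> *\<^sub>R (Mh *v u)" "M *v w = \<nu> *\<^sub>R (Mh *v w)" "\<mu> \<noteq> \<nu>"
  shows "u \<bullet> (Mh *v w) = 0"
proof -
  have "\<nu> * (u \<bullet> (Mh *v w)) = u \<bullet> (M *v w)"
    using assms(4) by simp
  also have "\<dots> = w \<bullet> (M *v u)"
    using assms(1) by (rule symmetric_inner_commute)
  also have "\<dots> = \<mu> * (u \<bullet> (Mh *v w))"
    using assms(3) symmetric_inner_commute[OF assms(2), of w u] by simp
  finally show ?thesis
    using assms(5) by simp
qed

text \<open>\<open>gamma_min\<close> is a \<open>Min\<close>, which is unspecified on infinite sets; eigenvectors of distinct
  eigenvalues are \<open>Mh\<close>-orthogonal, hence independent, so there are finitely many eigenvalues.\<close>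
lemma finite_real_eigs_inv_mult:
  fixes M Mh :: "real^'n^'n"
  assumes Mh: "spd Mh" and M: "transpose M = M"
  shows "finite (real_eigs (matrix_inv Mh ** M))"
proof -
  define S where "S = real_eigs (matrix_inv Mh ** M)"
  define e where "e \<mu> = (SOME v. v \<noteq> 0 \<and> M *v v = \<mu> *\<^sub>R (Mh *v v))" for \<mu>
  have e: "e \<mu> \<noteq> 0" "M *v e \<mu> = \<mu> *\<^sub>R (Mh *v e \<mu>)" if "\<mu> \<in> S" for \<mu>
    using someI_ex[OF that[unfolded S_def real_eigs_inv_mult_iff[OF Mh]]] by (simp_all add: e_def)
  have Mh_sym: "transpose Mh = Mh"
    using Mh by (simp add: spd_def)
  have pos: "e \<mu> \<bullet> (Mh *v e \<mu>) > 0" if "\<mu> \<in> S" for \<mu>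
    using e[OF that] Mh by (simp add: spd_def)
  have orth: "e \<mu> \<bullet> (Mh *v e \<nu>) = 0" if "\<mu> \<in> S" "\<nu> \<in> S" "\<mu> \<noteq> \<nu>" for \<mu> \<nu>
    using generalized_eigvecs_orthogonal[OF M Mh_sym e(2)[OF that(1)] e(2)[OF that(2)] that(3)] .
  have "inj_on e S"
    by (rule inj_onI, rule ccontr) (metis orth pos less_irrefl)
  moreover have "independent (e ` S)"
    by (rule independent_if_biorthogonal[of _ Mh]) (auto dest: orth pos)
  then have "finite (e ` S)"
    by (rule finiteI_independent)
  ultimately show ?thesis
    using S_def finite_imageD by blast
qed

lemma quadratic_nonneg_imp_linear_coeff_0:
  fixes a c :: real
  assumes "\<And>t. 0 \<le> t * a + t\<^sup>2 * c"
  shows "a = 0"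
proof (rule ccontr)
  assume "a \<noteq> 0"
  define k where "k = \<bar>c\<bar> + 1"
  define t where "t = - a / (2 * k)"
  have k: "0 < k" "c \<le> k"
    by (simp_all add: k_def)
  have "t * a + t\<^sup>2 * c \<le> t * a + t\<^sup>2 * k"
    using k by (simp add: mult_left_mono)
  also have "\<dots> = - a\<^sup>2 / (4 * k)"
    using k by (simp add: t_def field_simps power2_eq_square)
  also have "\<dots> < 0"
    using \<open>a \<noteq> 0\<close> k by (simp add: divide_pos_pos)
  finally show False
    using assms[of t] by simp
qed

lemma psd_quadratic_eq_0_imp_kernel:
  fixes N :: "real^'n^'n"
  assumes sym: "transpose N = N" and psd: "\<And>v. 0 \<le> v \<bullet> (N *v v)"
    and zero: "v \<bullet> (N *v v) = 0"
  shows "N *v v = 0"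
proof -
  define u where "u = N *v v"
  have "(v + t *\<^sub>R u) \<bullet> (N *v (v + t *\<^sub>R u)) = t * (2 * (u \<bullet> u)) + t\<^sup>2 * (u \<bullet> (N *v u))" for t
  proof -
    have "v \<bullet> (N *v u) = u \<bullet> u"
      using symmetric_inner_commute[OF sym, of v u] by (simp add: u_def)
    then show ?thesis
      using zero by (simp add: u_def algebra_simps inner_add_left inner_add_right power2_eq_square
          matrix_vector_mult_scaleR)
  qed
  then have "0 \<le> t * (2 * (u \<bullet> u)) + t\<^sup>2 * (u \<bullet> (N *v u))" for t
    using psd by metis
  then have "2 * (u \<bullet> u) = 0"
    by (rule quadratic_nonneg_imp_linear_coeff_0)
  then show ?thesis
    by (simp add: u_def)
qed

lemma quadratic_form_scaleR:
  fixes Q :: "real^'n^'n"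
  shows "(s *\<^sub>R v) \<bullet> (Q *v (s *\<^sub>R v)) = s\<^sup>2 * (v \<bullet> (Q *v v))"
  by (simp add: matrix_vector_mult_scaleR power2_eq_square)

lemma rayleigh_quotient_attains_min:
  fixes M Mh :: "real^'n^'n"
  assumes Mh: "spd Mh"
  obtains v0 m where "v0 \<noteq> 0" "v0 \<bullet> (M *v v0) = m * (v0 \<bullet> (Mh *v v0))"
    "\<And>v. m * (v \<bullet> (Mh *v v)) \<le> v \<bullet> (M *v v)"
proof -
  define K where "K = sphere (0::real^'n) 1"
  define f where "f v = (v \<bullet> (M *v v)) / (v \<bullet> (Mh *v v))" for v
  have K_pos: "v \<bullet> (Mh *v v) > 0" if "v \<in> K" for v
    using that Mh unfolding K_def spd_def by (metis mem_sphere_0 norm_zero zero_neq_one)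
  have "continuous_on K f"
    unfolding f_def by (intro continuous_intros) (use K_pos in force)
  moreover have "compact K" "K \<noteq> {}"
    by (simp_all add: K_def)
  ultimately obtain v0 where v0: "v0 \<in> K" "\<And>v. v \<in> K \<Longrightarrow> f v0 \<le> f v"
    using continuous_attains_inf by metis
  have "f v0 * (v \<bullet> (Mh *v v)) \<le> v \<bullet> (M *v v)" for v
  proof (cases "v = 0")
    case False
    define u where "u = (1 / norm v) *\<^sub>R v"
    have u: "u \<in> K" "v = norm v *\<^sub>R u"
      using False by (simp_all add: K_def u_def)
    have "f v0 * (u \<bullet> (Mh *v u)) \<le> u \<bullet> (M *v u)"
      using v0(2)[OF u(1)] K_pos[OF u(1)] by (simp add: f_def pos_le_divide_eq)
    then have "(norm v)\<^sup>2 * (f v0 * (u \<bullet> (Mh *v u))) \<le> (norm v)\<^sup>2 * (u \<bullet> (M *v u))"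
      by (rule mult_left_mono) simp
    moreover have "v \<bullet> (Q *v v) = (norm v)\<^sup>2 * (u \<bullet> (Q *v u))" for Q :: "real^'n^'n"
      using quadratic_form_scaleR[of "norm v" u Q] u(2) by simp
    ultimately show ?thesis
      by (simp add: mult.left_commute)
  qed simp
  moreover have "v0 \<noteq> 0" "v0 \<bullet> (M *v v0) = f v0 * (v0 \<bullet> (Mh *v v0))"
    using v0(1) K_pos[OF v0(1)] by (auto simp: K_def f_def)
  ultimately show ?thesis
    using that by blast
qed

text \<open>The minimizer of the Rayleigh quotient lies in the kernel of the positive semidefinite
  form \<open>M - m Mh\<close>.\<close>
lemma real_eig_le_rayleigh_quotient:
  fixes M Mh :: "real^'n^'n"
  assumes Mh: "spd Mh" and M: "transpose M = M"
  obtains m where "m \<in> real_eigs (matrix_inv Mh ** M)"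
    "\<And>v. m * (v \<bullet> (Mh *v v)) \<le> v \<bullet> (M *v v)"
proof -
  obtain v0 m where v0: "v0 \<noteq> 0" "v0 \<bullet> (M *v v0) = m * (v0 \<bullet> (Mh *v v0))"
    and bound: "\<And>v. m * (v \<bullet> (Mh *v v)) \<le> v \<bullet> (M *v v)"
    using rayleigh_quotient_attains_min[OF Mh] by metis
  define N where "N = M - m *\<^sub>R Mh"
  have N_mult: "N *v v = M *v v - m *\<^sub>R (Mh *v v)" for v
    by (simp add: N_def matrix_vector_mult_diff_rdistrib scaleR_matrix_vector_assoc)
  have "transpose N = N"
    using M Mh by (simp add: N_def spd_def transpose_def vec_eq_iff)
  moreover have "0 \<le> v \<bullet> (N *v v)" for v
    using bound[of v] by (simp add: N_mult inner_diff_right)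
  moreover have "v0 \<bullet> (N *v v0) = 0"
    using v0(2) by (simp add: N_mult inner_diff_right)
  ultimately have "N *v v0 = 0"
    by (rule psd_quadratic_eq_0_imp_kernel)
  then have "m \<in> real_eigs (matrix_inv Mh ** M)"
    using v0(1) real_eigs_inv_mult_iff[OF Mh] by (auto simp: N_mult)
  with bound show ?thesis
    using that by blast
qed

lemma gamma_min_le_rayleigh_quotient:
  fixes M Mh :: "real^'n^'n"
  assumes Mh: "spd Mh" and M: "transpose M = M"
  shows "gamma_min Mh M * (v \<bullet> (Mh *v v)) \<le> v \<bullet> (M *v v)"
proof -
  obtain m where m: "m \<in> real_eigs (matrix_inv Mh ** M)"
    "\<And>v. m * (v \<bullet> (Mh *v v)) \<le> v \<bullet> (M *v v)"
    using real_eig_le_rayleigh_quotient[OF Mh M] by metis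
  have "gamma_min Mh M \<le> m"
    unfolding gamma_min_def using finite_real_eigs_inv_mult[OF Mh M] m(1) by simp
  then have "gamma_min Mh M * (v \<bullet> (Mh *v v)) \<le> m * (v \<bullet> (Mh *v v))"
    using spd_quadratic_nonneg[OF Mh] by (rule mult_right_mono)
  then show ?thesis
    using m(2)[of v] by linarith
qed

lemma gamma_min_pos:
  fixes M Mh :: "real^'n^'n"
  assumes Mh: "spd Mh" and M: "spd M"
  shows "0 < gamma_min Mh M"
proof -
  have M_sym: "transpose M = M"
    using M by (simp add: spd_def)
  obtain m where "m \<in> real_eigs (matrix_inv Mh ** M)"
    using real_eig_le_rayleigh_quotient[OF Mh M_sym] by metis
  then have "gamma_min Mh M \<in> real_eigs (matrix_inv Mh ** M)"
    unfolding gamma_min_def using finite_real_eigs_inv_mult[OF Mh M_sym] by (intro Min_in) auto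
  then obtain v where v: "v \<noteq> 0" "M *v v = gamma_min Mh M *\<^sub>R (Mh *v v)"
    using real_eigs_inv_mult_iff[OF Mh] by blast
  then have "0 < gamma_min Mh M * (v \<bullet> (Mh *v v))"
    using M unfolding spd_def by (metis inner_scaleR_right)
  moreover have "0 < v \<bullet> (Mh *v v)"
    using v(1) Mh by (simp add: spd_def)
  ultimately show ?thesis
    by (simp add: zero_less_mult_iff)
qed

definition cinner :: "complex^'n \<Rightarrow> complex^'n \<Rightarrow> complex" where
  "cinner u v = (\<Sum>i\<in>UNIV. cnj (u $ i) * v $ i)"

lemma cinner_add_right: "cinner u (v + w) = cinner u v + cinner u w"
  by (simp add: cinner_def distrib_left sum.distrib)

lemma cinner_diff_right: "cinner u (v - w) = cinner u v - cinner u w"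
  by (simp add: cinner_def right_diff_distrib sum_subtractf)

lemma cinner_minus_right: "cinner u (- v) = - cinner u v"
  by (simp add: cinner_def sum_negf)

lemma cinner_scale_right: "cinner u (c *s v) = c * cinner u v"
  by (simp add: cinner_def sum_distrib_left mult_ac)

lemma cinner_cmat_adjoint:
  fixes M :: "real^'n^'m"
  shows "cinner u (cmat M *v v) = cnj (cinner v (cmat (transpose M) *v u))"
proof -
  have "cnj (cinner v (cmat (transpose M) *v u))
      = (\<Sum>j\<in>UNIV. \<Sum>i\<in>UNIV. cnj (u $ i) * complex_of_real (M $ i $ j) * v $ j)"
    unfolding cinner_def cmat_def matrix_vector_mult_def transpose_def
    by (simp add: cnj_sum sum_distrib_left mult_ac)
  also have "\<dots> = (\<Sum>i\<in>UNIV. \<Sum>j\<in>UNIV. cnj (u $ i) * complex_of_real (M $ i $ j) * v $ j)"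
    by (rule sum.swap)
  also have "\<dots> = cinner u (cmat M *v v)"
    unfolding cinner_def cmat_def matrix_vector_mult_def by (simp add: sum_distrib_left mult_ac)
  finally show ?thesis ..
qed

lemma cinner_cmat_symmetric:
  fixes M :: "real^'n^'n"
  assumes "transpose M = M"
  shows "cinner v (cmat M *v v) = complex_of_real (hqf M v)"
proof -
  have "cnj (cinner v (cmat M *v v)) = cinner v (cmat M *v v)"
    using cinner_cmat_adjoint[of v M v] assms by simp
  then have "Im (cinner v (cmat M *v v)) = 0"
    by (metis Reals_cnj_iff complex_is_Real_iff)
  moreover have "Re (cinner v (cmat M *v v)) = hqf M v"
    unfolding cinner_def cmat_def matrix_vector_mult_def hqf_def by (simp add: sum_distrib_left mult_ac)
  ultimately show ?thesis
    by (simp add: complex_eq_iff)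
qed

definition vec_Re :: "complex^'n \<Rightarrow> real^'n" where
  "vec_Re v = (\<chi> i. Re (v $ i))"

definition vec_Im :: "complex^'n \<Rightarrow> real^'n" where
  "vec_Im v = (\<chi> i. Im (v $ i))"

lemma vec_eq_0_iff_Re_Im: "v = 0 \<longleftrightarrow> vec_Re v = 0 \<and> vec_Im v = 0"
  unfolding vec_Re_def vec_Im_def by (auto simp: vec_eq_iff complex_eq_iff)

lemma vec_Re_cmat_mult: "vec_Re (cmat M *v v) = M *v vec_Re v"
  and vec_Im_cmat_mult: "vec_Im (cmat M *v v) = M *v vec_Im v"
  unfolding vec_Re_def vec_Im_def cmat_def matrix_vector_mult_def
  by (simp_all add: vec_eq_iff Re_sum Im_sum)

lemma hqf_Re_Im: "hqf M v = vec_Re v \<bullet> (M *v vec_Re v) + vec_Im v \<bullet> (M *v vec_Im v)"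
  unfolding hqf_def vec_Re_def vec_Im_def inner_vec_def matrix_vector_mult_def
  by (simp add: Re_sum algebra_simps sum_distrib_left sum.distrib)

lemma cmat_mult_eq_0_iff:
  fixes M :: "real^'n^'m"
  assumes "inj ((*v) M)"
  shows "cmat M *v v = 0 \<longleftrightarrow> v = 0"
  using assms vec_eq_0_iff_Re_Im[of v] vec_eq_0_iff_Re_Im[of "cmat M *v v"]
  by (auto simp: vec_Re_cmat_mult vec_Im_cmat_mult dest: injD[where y = 0])

lemma hqf_pos:
  fixes M :: "real^'n^'n"
  assumes "spd M" "v \<noteq> 0"
  shows "0 < hqf M v"
  using assms vec_eq_0_iff_Re_Im[of v] spd_quadratic_nonneg[OF assms(1)]
  unfolding hqf_Re_Im spd_def by (metis add_pos_nonneg add_nonneg_pos)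

lemma hqf_nonneg:
  fixes M :: "real^'n^'n"
  assumes "spd M"
  shows "0 \<le> hqf M v"
  using spd_quadratic_nonneg[OF assms] by (simp add: hqf_Re_Im)

lemma hqf_eq_0_iff:
  fixes M :: "real^'n^'n"
  assumes "spd M"
  shows "hqf M v = 0 \<longleftrightarrow> v = 0"
  using hqf_pos[OF assms, of v] by (cases "v = 0") (auto simp: hqf_def)

lemma gamma_min_le_hqf:
  fixes M Mh :: "real^'n^'n"
  assumes "spd Mh" "transpose M = M"
  shows "gamma_min Mh M * hqf Mh v \<le> hqf M v"
  using gamma_min_le_rayleigh_quotient[OF assms, of "vec_Re v"]
    gamma_min_le_rayleigh_quotient[OF assms, of "vec_Im v"]
  by (simp add: hqf_Re_Im distrib_left)

text \<open>Only the imaginary part of the first equation has to be divided by \<open>Im lam\<close>; it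
  determines \<open>X + Re p\<close>, and both identities then follow by substitution.\<close>
lemma complex_eig_scalar_identities:
  fixes \<alpha> X \<delta> Y \<epsilon> Z :: real and p q lam :: complex
  assumes e1: "complex_of_real \<alpha> + p = lam * (complex_of_real X + p)"
    and e2: "cnj p - complex_of_real \<delta> + q = lam * (- complex_of_real Y + q)"
    and e3: "cnj q + complex_of_real \<epsilon> = lam * complex_of_real Z"
    and nonreal: "Im lam \<noteq> 0"
  shows "Y = X + \<delta> + (cmod (lam - 1))\<^sup>2 * Z"
    and "\<alpha> - X + (cmod (lam - 1))\<^sup>2 * (Y - Z + \<epsilon>) = 0"
proof -
  define a b where "a = Re lam" "b = Im lam"
  have R1: "\<alpha> + Re p = a * (X + Re p) - b * Im p" and I1: "Im p = b * (X + Re p) + a * Im p"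
    using arg_cong[OF e1, of Re] arg_cong[OF e1, of Im] by (simp_all add: a_b_def)
  have R2: "Re p - \<delta> + Re q = a * (Re q - Y) - b * Im q"
    and I2: "- Im p + Im q = b * (Re q - Y) + a * Im q"
    using arg_cong[OF e2, of Re] arg_cong[OF e2, of Im] by (simp_all add: a_b_def algebra_simps)
  have q: "Re q = a * Z - \<epsilon>" "Im q = - (b * Z)"
    using arg_cong[OF e3, of Re] arg_cong[OF e3, of Im] by (simp_all add: a_b_def)
  have r: "(cmod (lam - 1))\<^sup>2 = (a - 1)\<^sup>2 + b\<^sup>2"
    by (simp add: cmod_power2 a_b_def)
  have p2: "Im p = b * (Y + \<epsilon> - Z)"
    using I2 unfolding q by (simp add: algebra_simps)
  have p1: "Re p = \<delta> - a * Z + \<epsilon> + a * (a * Z - \<epsilon> - Y) + b * b * Z"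
    using R2 unfolding q by (simp add: algebra_simps)
  have "b * (X + Re p) = b * ((1 - a) * (Y + \<epsilon> - Z))"
    using I1 unfolding p2 by (simp add: algebra_simps)
  then have Xp: "X + Re p = (1 - a) * (Y + \<epsilon> - Z)"
    using nonreal by (simp add: a_b_def)
  show "Y = X + \<delta> + (cmod (lam - 1))\<^sup>2 * Z"
    using Xp unfolding p1 r by (simp add: algebra_simps power2_eq_square)
  have "\<alpha> - X = - (1 - a) * (X + Re p) - b * Im p"
    using R1 by (simp add: algebra_simps)
  then show "\<alpha> - X + (cmod (lam - 1))\<^sup>2 * (Y - Z + \<epsilon>) = 0"
    unfolding Xp p2 r by (simp add: algebra_simps power2_eq_square)
qed

text \<open>Multiply the three block rows by \<open>w1\<^sup>H\<close>, \<open>w2\<^sup>H\<close>, \<open>w3\<^sup>H\<close>; the coupling terms are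
  \<open>p = w1\<^sup>H B\<^sup>T w2\<close> and \<open>q = w2\<^sup>H C\<^sup>T w3\<close>.\<close>
lemma gen_eig_hqf_identities:
  fixes A Ah :: "real^'n^'n" and B :: "real^'n^'m" and C :: "real^'m^'p"
    and D Sh :: "real^'m^'m" and E Xh :: "real^'p^'p"
  assumes sym: "transpose A = A" "transpose Ah = Ah" "transpose D = D"
      "transpose Sh = Sh" "transpose E = E" "transpose Xh = Xh"
    and eig: "gen_eig A B C D E Ah Sh Xh lam w1 w2 w3" and nonreal: "Im lam \<noteq> 0"
  shows "hqf Sh w2 = hqf Ah w1 + hqf D w2 + (cmod (lam - 1))\<^sup>2 * hqf Xh w3"
    and "hqf A w1 - hqf Ah w1 + (cmod (lam - 1))\<^sup>2 * (hqf Sh w2 - hqf Xh w3 + hqf E w3) = 0"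
proof -
  define p where "p = cinner w1 (cmat (transpose B) *v w2)"
  define q where "q = cinner w2 (cmat (transpose C) *v w3)"
  note hqf_simps = cinner_cmat_symmetric[OF sym(1)] cinner_cmat_symmetric[OF sym(2)]
    cinner_cmat_symmetric[OF sym(3)] cinner_cmat_symmetric[OF sym(4)]
    cinner_cmat_symmetric[OF sym(5)] cinner_cmat_symmetric[OF sym(6)]
  note cinner_simps = cinner_add_right cinner_diff_right cinner_minus_right cinner_scale_right
  have row1: "cmat A *v w1 + cmat (transpose B) *v w2
      = lam *s (cmat Ah *v w1 + cmat (transpose B) *v w2)"
    and row2: "cmat B *v w1 - cmat D *v w2 + cmat (transpose C) *v w3
      = lam *s (- (cmat Sh *v w2) + cmat (transpose C) *v w3)"
    and row3: "cmat C *v w2 + cmat E *v w3 = lam *s (cmat Xh *v w3)"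
    using eig unfolding gen_eig_def by auto
  have p_adj: "cinner w2 (cmat B *v w1) = cnj p"
    unfolding p_def using cinner_cmat_adjoint[of w2 B w1] by simp
  have q_adj: "cinner w3 (cmat C *v w2) = cnj q"
    unfolding q_def using cinner_cmat_adjoint[of w3 C w2] by simp
  have e1: "complex_of_real (hqf A w1) + p = lam * (complex_of_real (hqf Ah w1) + p)"
    using arg_cong[OF row1, of "cinner w1"] by (simp add: p_def cinner_simps hqf_simps distrib_left)
  have e2: "cnj p - complex_of_real (hqf D w2) + q = lam * (- complex_of_real (hqf Sh w2) + q)"
    using arg_cong[OF row2, of "cinner w2"]
    by (simp add: q_def p_adj[symmetric] cinner_simps hqf_simps ring_distribs)
  have e3: "cnj q + complex_of_real (hqf E w3) = lam * complex_of_real (hqf Xh w3)"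
    using arg_cong[OF row3, of "cinner w3"] by (simp add: q_adj[symmetric] cinner_simps hqf_simps)
  show "hqf Sh w2 = hqf Ah w1 + hqf D w2 + (cmod (lam - 1))\<^sup>2 * hqf Xh w3"
    and "hqf A w1 - hqf Ah w1 + (cmod (lam - 1))\<^sup>2 * (hqf Sh w2 - hqf Xh w3 + hqf E w3) = 0"
    using complex_eig_scalar_identities[OF e1 e2 e3 nonreal] by auto
qed

lemma bound_from_hqf_identities:
  fixes X Y Z \<alpha> \<delta> \<epsilon> r gA gD gE :: real
  assumes ident: "Y = X + \<delta> + r * Z" "\<alpha> - X + r * (Y - Z + \<epsilon>) = 0"
    and low: "gA * X \<le> \<alpha>" "gD * Y \<le> \<delta>" "gE * Z \<le> \<epsilon>"
    and pos: "0 < r" "0 < Y + gE * Z"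
  shows "r \<le> 1 - (gA * X + gD * Y + gE * Z) / (Y + gE * Z)"
proof -
  have "r * (Y + gE * Z) \<le> r * (Y + \<epsilon>)"
    using low(3) pos(1) by simp
  also have "\<dots> = Y - \<delta> - \<alpha>"
    using ident by (simp add: algebra_simps)
  also have "\<dots> \<le> (1 - gD) * Y - gA * X"
    using low(1,2) by (simp add: algebra_simps)
  finally show ?thesis
    using pos(2) by (simp add: field_simps)
qed

lemma gen_eig_nonreal_bound:
  fixes A Ah :: "real^'n^'n" and B :: "real^'n^'m" and C :: "real^'m^'p"
    and D Sh :: "real^'m^'m" and E Xh :: "real^'p^'p"
  assumes sym: "transpose A = A" "transpose D = D" and E: "spd E"
    and hat: "spd Ah" "spd Sh" "spd Xh"
    and eig: "gen_eig A B C D E Ah Sh Xh lam w1 w2 w3" and nonreal: "Im lam \<noteq> 0"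
  shows "cmod (lam - 1) \<le> sqrt (1 -
      (gamma_min Ah A * hqf Ah w1 + gamma_min Sh D * hqf Sh w2 + gamma_min Xh E * hqf Xh w3)
      / (hqf Sh w2 + gamma_min Xh E * hqf Xh w3))"
proof -
  define r where "r = (cmod (lam - 1))\<^sup>2"
  have E_sym: "transpose E = E"
    using E by (simp add: spd_def)
  have ident: "hqf Sh w2 = hqf Ah w1 + hqf D w2 + r * hqf Xh w3"
      "hqf A w1 - hqf Ah w1 + r * (hqf Sh w2 - hqf Xh w3 + hqf E w3) = 0"
    using gen_eig_hqf_identities[OF _ _ _ _ _ _ eig nonreal] sym E_sym hat
    by (simp_all add: spd_def r_def)
  have gE: "0 < gamma_min Xh E"
    using hat(3) E by (rule gamma_min_pos)
  have den: "0 < hqf Sh w2 + gamma_min Xh E * hqf Xh w3"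
  proof (rule ccontr)
    assume "\<not> ?thesis"
    moreover have "0 \<le> hqf Sh w2" "0 \<le> gamma_min Xh E * hqf Xh w3"
      using hat(2,3) gE by (simp_all add: hqf_nonneg)
    ultimately have "hqf Sh w2 = 0" "gamma_min Xh E * hqf Xh w3 = 0"
      by linarith+
    then have "w2 = 0" "w3 = 0"
      using gE hqf_eq_0_iff[OF hat(2)] hqf_eq_0_iff[OF hat(3)] by simp_all
    moreover from this have "w1 = 0"
      using ident(1) hqf_eq_0_iff[OF hat(1)] by (simp add: hqf_def)
    ultimately show False
      using eig by (simp add: gen_eig_def)
  qed
  have "0 < r"
    using nonreal by (auto simp: r_def complex_eq_iff)
  then have "r \<le> 1 -
      (gamma_min Ah A * hqf Ah w1 + gamma_min Sh D * hqf Sh w2 + gamma_min Xh E * hqf Xh w3)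
      / (hqf Sh w2 + gamma_min Xh E * hqf Xh w3)"
    using bound_from_hqf_identities[OF ident gamma_min_le_hqf[OF hat(1) sym(1)]
        gamma_min_le_hqf[OF hat(2) sym(2)] gamma_min_le_hqf[OF hat(3) E_sym]] den
    by blast
  then show ?thesis
    unfolding r_def by (simp add: real_le_rsqrt)
qed

lemma gen_eig_real_if_gamma_min_ge_1:
  fixes A Ah :: "real^'n^'n" and B :: "real^'n^'m" and C :: "real^'m^'p"
    and D Sh :: "real^'m^'m" and E Xh :: "real^'p^'p"
  assumes sym: "transpose A = A" "transpose D = D" "transpose E = E"
    and hat: "spd Ah" "spd Sh" "spd Xh" and B: "inj ((*v) (transpose B))"
    and gD: "1 \<le> gamma_min Sh D" and eig: "gen_eig A B C D E Ah Sh Xh lam w1 w2 w3"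
  shows "Im lam = 0"
proof (rule ccontr)
  assume nonreal: "Im lam \<noteq> 0"
  define r where "r = (cmod (lam - 1))\<^sup>2"
  have ident: "hqf Sh w2 = hqf Ah w1 + hqf D w2 + r * hqf Xh w3"
    using gen_eig_hqf_identities(1)[OF _ _ _ _ _ _ eig nonreal] sym hat by (simp add: spd_def r_def)
  have "hqf Sh w2 \<le> gamma_min Sh D * hqf Sh w2"
    using mult_right_mono[OF gD hqf_nonneg[OF hat(2)]] by simp
  also have "\<dots> \<le> hqf D w2"
    using gamma_min_le_hqf[OF hat(2) sym(2)] .
  finally have "hqf Ah w1 + r * hqf Xh w3 \<le> 0"
    using ident by simp
  moreover have "0 < r"
    using nonreal by (auto simp: r_def complex_eq_iff)
  moreover have "0 \<le> hqf Ah w1" "0 \<le> r * hqf Xh w3"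
    using hat(1,3) \<open>0 < r\<close> by (simp_all add: hqf_nonneg)
  ultimately have "hqf Ah w1 = 0" "r * hqf Xh w3 = 0"
    by linarith+
  then have w13: "w1 = 0" "w3 = 0"
    using \<open>0 < r\<close> hqf_eq_0_iff[OF hat(1)] hqf_eq_0_iff[OF hat(3)] by simp_all
  define u where "u = cmat (transpose B) *v w2"
  have "u = lam *s u"
    using eig w13 by (simp add: gen_eig_def u_def)
  moreover have "lam \<noteq> 1"
    using nonreal by auto
  ultimately have "u = 0"
    by (auto simp: vec_eq_iff)
  then have "w2 = 0"
    using cmat_mult_eq_0_iff[OF B] by (simp add: u_def)
  with w13 eig show False
    by (simp add: gen_eig_def)
qed

theorem theorem1:
  fixes A Ah :: "real^'n^'n" and B :: "real^'n^'m" and C :: "real^'m^'p"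
    and D Sh :: "real^'m^'m" and E Xh :: "real^'p^'p"
  assumes dims: "CARD('n) \<ge> CARD('m)" "CARD('n) \<ge> CARD('p)"
    and A_spd: "spd A" and E_spd: "spd E" and D_psd: "spsd D"
    and B_rank: "rank B = CARD('m)"
    and C_rank: "rank C = min CARD('p) CARD('m)"
    and Ah_spd: "spd Ah" and Sh_spd: "spd Sh" and Xh_spd: "spd Xh"
    and one_in: "gamma_min Ah A \<le> 1" "1 \<le> gamma_max Ah A"
  shows
    "(gamma_min Sh D < 1 \<longrightarrow>
       (\<forall>lam w1 w2 w3. gen_eig A B C D E Ah Sh Xh lam w1 w2 w3 \<and> Im lam \<noteq> 0 \<longrightarrow>
          cmod (lam - 1) \<le> sqrt (1 -
            (gamma_min Ah A * hqf Ah w1 + gamma_min Sh D * hqf Sh w2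
               + gamma_min Xh E * hqf Xh w3)
            / (hqf Sh w2 + gamma_min Xh E * hqf Xh w3)))) \<and>
     (gamma_min Sh D \<ge> 1 \<longrightarrow>
       (\<forall>lam w1 w2 w3. gen_eig A B C D E Ah Sh Xh lam w1 w2 w3 \<longrightarrow> Im lam = 0))"
proof -
  have sym: "transpose A = A" "transpose D = D" "transpose E = E"
    using A_spd D_psd E_spd by (simp_all add: spd_def spsd_def)
  have "inj ((*v) (transpose B))"
    using B_rank full_rank_injective[of "transpose B"] by (simp add: rank_transpose)
  then show ?thesis
    using gen_eig_nonreal_bound[OF sym(1,2) E_spd Ah_spd Sh_spd Xh_spd]
      gen_eig_real_if_gamma_min_ge_1[OF sym Ah_spd Sh_spd Xh_spd]
    by blast
qed

end
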